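(* Let $p\in(0,1)$, $q=1-p$, $N\ge1$, and let $Z$ be the Markov chain on $\{0,1,\dots,N\}$ with transition probabilities: given $Z(t)=m$, $Z(t+1)$ has the binomial law $\mathcal B(N,1-q^m)$ if $m\ge1$, and $\mathcal B(N,1-q^N)$ if $m=0$. Let $P_N,E_N$ refer to the chain started at $Z(0)=N$, and $T_k=\inf\{t\ge1:Z(t)=k\}$. Then, as $N\to\infty$, $$P_N(T_0<T_N)\sim q^{N^2}2^N,\qquad \lim_{N\to\infty}E_N(T_0\mid T_0<T_N)=2,\qquad \lim_{N\to\infty}E_N(T_N\mid T_N<T_0)=1.$$
   Context: $a_N\sim b_N$ means $a_N/b_N\to1$. *)

theory Defs
  imports "HOL-Probability.Probability" "HOL-Library.Landau_Symbols"
begin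

definition trans_prob :: "real \<Rightarrow> nat \<Rightarrow> nat \<Rightarrow> nat \<Rightarrow> real" where
  "trans_prob p N m k =
     pmf (binomial_pmf N (1 - (1 - p) ^ (if m = 0 then N else m))) k"

text \<open>For t \<ge> 1: probability, for the chain started at Z(0) = N, that Z(t) = a and
  Z(s) \<notin> {a, b} for all 1 \<le> s < t, i.e. the event {T_a = t, T_b > t}.\<close>
definition first_hit_at :: "real \<Rightarrow> nat \<Rightarrow> nat \<Rightarrow> nat \<Rightarrow> nat \<Rightarrow> real" where
  "first_hit_at p N a b t =
     (\<Sum>zs \<in> {zs. set zs \<subseteq> {0..N} - {a, b} \<and> length zs = t - 1}.
        \<Prod>i<t. trans_prob p N ((N # zs @ [a]) ! i) ((N # zs @ [a]) ! Suc i))"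

text \<open>P_N(T_a < T_b), with T_k = inf {t \<ge> 1. Z(t) = k}.\<close>
definition hit_before :: "real \<Rightarrow> nat \<Rightarrow> nat \<Rightarrow> nat \<Rightarrow> real" where
  "hit_before p N a b = (\<Sum>t. first_hit_at p N a b (Suc t))"

definition hit_time_mass :: "real \<Rightarrow> nat \<Rightarrow> nat \<Rightarrow> nat \<Rightarrow> real" where
  "hit_time_mass p N a b = (\<Sum>t. real (Suc t) * first_hit_at p N a b (Suc t))"

definition cond_hit_time :: "real \<Rightarrow> nat \<Rightarrow> nat \<Rightarrow> nat \<Rightarrow> real" where
  "cond_hit_time p N a b = hit_time_mass p N a b / hit_before p N a b"

end

theory Submission
  imports Defs "HOL-Real_Asymp.Real_Asymp"
begin

text \<open>Write \<open>q = 1 - p\<close>. First passage probabilities are taboo probabilities of the binomial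
  kernel, i.e. sums over paths that avoid \<open>{0, N}\<close> before the last step. From \<open>N\<close> the chain
  jumps to \<open>0\<close> with probability \<open>q^(N^2)\<close>, while the two-step paths \<open>N \<rightarrow> z \<rightarrow> 0\<close> carry the
  total weight \<open>q^(N^2) ((2 - q^N)^N - 1 - (1 - q^N)^N) \<approx> q^(N^2) 2^N\<close>; hence \<open>T_0 = 2\<close> is the
  typical way to reach \<open>0\<close> first. All longer paths are negligible: a Lyapunov function \<open>u\<close>
  with \<open>2 (T x 0 + \<Sum>y. T x y u y) \<le> u x\<close> bounds the taboo probabilities weighted by \<open>2^t\<close>,
  which controls the remaining probability and the remaining first moment at once. Building
  \<open>u\<close> requires splitting the states at distance \<open>\<lfloor>\<surd>N\<rfloor>\<close> from \<open>N\<close>. From \<open>N\<close> the chain returns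
  to \<open>N\<close> in one step with probability \<open>(1 - q^N)^N \<rightarrow> 1\<close>, and the same device bounds
  everything else by a multiple of \<open>1 - (1 - q^N)^N\<close>.\<close>

section \<open>Taboo probabilities\<close>

text \<open>The chain driven by \<open>T\<close>, started at \<open>x\<close>, stays in \<open>S\<close> for \<open>n\<close> steps and then jumps to \<open>a\<close>.\<close>

fun taboo_prob :: "('a \<Rightarrow> 'a \<Rightarrow> real) \<Rightarrow> 'a set \<Rightarrow> 'a \<Rightarrow> nat \<Rightarrow> 'a \<Rightarrow> real" where
  "taboo_prob T S a 0 x = T x a"
| "taboo_prob T S a (Suc n) x = (\<Sum>y\<in>S. T x y * taboo_prob T S a n y)"

lemma sum_paths_eq_taboo_prob:
  "(\<Sum>zs\<in>{zs. set zs \<subseteq> S \<and> length zs = n}.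
      \<Prod>i<Suc n. T ((x # zs @ [a]) ! i) ((x # zs @ [a]) ! Suc i)) = taboo_prob T S a n x"
proof (induction n arbitrary: x)
  case 0
  have "{zs. set zs \<subseteq> S \<and> length zs = 0} = {[]}" by auto
  then show ?case by simp
next
  case (Suc n)
  let ?L = "{zs. set zs \<subseteq> S \<and> length zs = n}"
  let ?w = "\<lambda>z zs. \<Prod>i<Suc n. T ((z # zs @ [a]) ! i) ((z # zs @ [a]) ! Suc i)"
  have inj: "inj_on (\<lambda>(zs, z). z # zs) (?L \<times> S)" by (auto simp: inj_on_def)
  have "(\<Sum>zs\<in>{zs. set zs \<subseteq> S \<and> length zs = Suc n}.
          \<Prod>i<Suc (Suc n). T ((x # zs @ [a]) ! i) ((x # zs @ [a]) ! Suc i))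
      = (\<Sum>(zs, z)\<in>?L \<times> S. \<Prod>i<Suc (Suc n). T ((x # (z # zs) @ [a]) ! i) ((x # (z # zs) @ [a]) ! Suc i))"
    by (subst lists_length_Suc_eq, subst sum.reindex[OF inj]) (simp only: comp_def case_prod_unfold)
  also have "\<dots> = (\<Sum>(zs, z)\<in>?L \<times> S. T x z * ?w z zs)"
    by (intro sum.cong refl)
       (simp only: prod.lessThan_Suc_shift nth_Cons_0 nth_Cons_Suc case_prod_unfold append_Cons)
  also have "\<dots> = (\<Sum>z\<in>S. T x z * (\<Sum>zs\<in>?L. ?w z zs))"
    by (simp add: sum.cartesian_product[symmetric] sum_distrib_left sum.swap[of _ S])
  also have "\<dots> = taboo_prob T S a (Suc n) x" using Suc by simp
  finally show ?case .
qed

lemma first_hit_at_eq_taboo_prob: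
  "first_hit_at p N a b (Suc n) = taboo_prob (trans_prob p N) ({0..N} - {a, b}) a n N"
  unfolding first_hit_at_def by (subst sum_paths_eq_taboo_prob[symmetric]) auto

lemma taboo_prob_nonneg: "(\<And>x y. 0 \<le> T x y) \<Longrightarrow> 0 \<le> taboo_prob T S a n x"
  by (induction n arbitrary: x) (auto intro!: sum_nonneg)

lemma taboo_prob_weighted_sum_le:
  assumes T_nonneg: "\<And>x y. 0 \<le> T x y" and "0 \<le> l"
    and u_nonneg: "\<And>x. x \<in> S \<Longrightarrow> 0 \<le> u x"
    and lyapunov: "\<And>x. x \<in> S \<Longrightarrow> l * (T x a + (\<Sum>y\<in>S. T x y * u y)) \<le> u x"
    and "x \<in> S"
  shows "(\<Sum>n<M. l ^ Suc n * taboo_prob T S a n x) \<le> u x"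
  using \<open>x \<in> S\<close>
proof (induction M arbitrary: x)
  case 0
  then show ?case using u_nonneg by simp
next
  case (Suc M)
  have "(\<Sum>n<Suc M. l ^ Suc n * taboo_prob T S a n x)
      = l * T x a + l * (\<Sum>y\<in>S. T x y * (\<Sum>n<M. l ^ Suc n * taboo_prob T S a n y))"
    by (subst sum.lessThan_Suc_shift)
       (simp add: sum_distrib_left sum_distrib_right mult_ac sum.swap[of _ "{..<M}"])
  also have "\<dots> \<le> l * T x a + l * (\<Sum>y\<in>S. T x y * u y)"
    by (intro add_left_mono mult_left_mono sum_mono T_nonneg Suc.IH \<open>0 \<le> l\<close>)
  also have "\<dots> \<le> u x"
    using lyapunov[OF Suc.prems] by (simp add: algebra_simps)
  finally show ?case .
qed

lemma taboo_prob_weighted_tail_le: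
  assumes T_nonneg: "\<And>x y. 0 \<le> T x y" and "0 \<le> l"
    and u_nonneg: "\<And>x. x \<in> S \<Longrightarrow> 0 \<le> u x"
    and lyapunov: "\<And>x. x \<in> S \<Longrightarrow> l * (T x a + (\<Sum>y\<in>S. T x y * u y)) \<le> u x"
  shows "(\<Sum>n<M. l ^ Suc n * taboo_prob T S a (Suc n) x) \<le> (\<Sum>y\<in>S. T x y * u y)"
proof -
  have "(\<Sum>n<M. l ^ Suc n * taboo_prob T S a (Suc n) x)
      = (\<Sum>y\<in>S. T x y * (\<Sum>n<M. l ^ Suc n * taboo_prob T S a n y))"
    by (simp add: sum_distrib_left sum_distrib_right mult_ac sum.swap[of _ "{..<M}"])
  also have "\<dots> \<le> (\<Sum>y\<in>S. T x y * u y)"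
    by (intro sum_mono mult_left_mono T_nonneg taboo_prob_weighted_sum_le[OF assms])
  finally show ?thesis .
qed

lemma taboo_prob_weighted_tail2_le:
  assumes T_nonneg: "\<And>x y. 0 \<le> T x y" and "0 \<le> l"
    and u_nonneg: "\<And>x. x \<in> S \<Longrightarrow> 0 \<le> u x"
    and lyapunov: "\<And>x. x \<in> S \<Longrightarrow> l * (T x a + (\<Sum>y\<in>S. T x y * u y)) \<le> u x"
  shows "(\<Sum>n<M. l ^ Suc (Suc n) * taboo_prob T S a (Suc (Suc n)) x)
           \<le> (\<Sum>y\<in>S. T x y * (u y - l * T y a))"
proof -
  have "(\<Sum>n<M. l ^ Suc (Suc n) * taboo_prob T S a (Suc (Suc n)) x)
      = (\<Sum>y\<in>S. T x y * (l * (\<Sum>n<M. l ^ Suc n * taboo_prob T S a (Suc n) y)))"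
    by (simp add: sum_distrib_left sum_distrib_right mult_ac sum.swap[of _ "{..<M}"])
  also have "\<dots> \<le> (\<Sum>y\<in>S. T x y * (l * (\<Sum>z\<in>S. T y z * u z)))"
    by (intro sum_mono mult_left_mono T_nonneg taboo_prob_weighted_tail_le[OF assms] \<open>0 \<le> l\<close>)
  also have "\<dots> \<le> (\<Sum>y\<in>S. T x y * (u y - l * T y a))"
  proof (intro sum_mono mult_left_mono T_nonneg)
    fix y assume "y \<in> S"
    then show "l * (\<Sum>z\<in>S. T y z * u z) \<le> u y - l * T y a"
      using lyapunov by (simp add: algebra_simps)
  qed
  finally show ?thesis .
qed

lemma suminf_initial_segment_bounds:
  fixes g :: "nat \<Rightarrow> real"
  assumes g_nonneg: "\<And>t. 0 \<le> g t" and tail: "\<And>M. (\<Sum>t<M. g (t + j)) \<le> R"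
  shows "(\<Sum>t<j. g t) \<le> (\<Sum>t. g t)" and "(\<Sum>t. g t) \<le> (\<Sum>t<j. g t) + R"
proof -
  have summable_tail: "summable (\<lambda>t. g (t + j))"
    by (rule summableI_nonneg_bounded[OF g_nonneg tail])
  then have "(\<Sum>t. g t) = (\<Sum>t. g (t + j)) + (\<Sum>t<j. g t)"
    by (intro suminf_split_initial_segment) (simp add: summable_iff_shift)
  moreover have "0 \<le> (\<Sum>t. g (t + j))"
    by (intro suminf_nonneg summable_tail g_nonneg)
  moreover have "(\<Sum>t. g (t + j)) \<le> R"
    by (intro suminf_le_const summable_tail tail)
  ultimately show "(\<Sum>t<j. g t) \<le> (\<Sum>t. g t)" and "(\<Sum>t. g t) \<le> (\<Sum>t<j. g t) + R"
    by simp_all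
qed

lemma first_moment_series_bounds:
  fixes h :: "nat \<Rightarrow> real"
  assumes h_nonneg: "\<And>t. 0 \<le> h t" and tail: "\<And>M. (\<Sum>t<M. 2 ^ (t + j) * h (t + j)) \<le> R"
  shows "(\<Sum>t<j. h t) \<le> (\<Sum>t. h t)" and "(\<Sum>t. h t) \<le> (\<Sum>t<j. h t) + R"
    and "(\<Sum>t<j. real (Suc t) * h t) \<le> (\<Sum>t. real (Suc t) * h t)"
    and "(\<Sum>t. real (Suc t) * h t) \<le> (\<Sum>t<j. real (Suc t) * h t) + R"
proof -
  have weight: "h t \<le> real (Suc t) * h t" "real (Suc t) * h t \<le> 2 ^ t * h t" for t
  proof -
    have "real (Suc t) \<le> 2 ^ t"
      using less_exp[of t] by (metis Suc_leI of_nat_le_iff of_nat_numeral of_nat_power)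
    then show "h t \<le> real (Suc t) * h t" "real (Suc t) * h t \<le> 2 ^ t * h t"
      using h_nonneg[of t] mult_right_mono[of 1 "real (Suc t)" "h t"] by (auto intro: mult_right_mono)
  qed
  have moment_tail: "(\<Sum>t<M. real (Suc (t + j)) * h (t + j)) \<le> R" for M
  proof -
    have "(\<Sum>t<M. real (Suc (t + j)) * h (t + j)) \<le> (\<Sum>t<M. 2 ^ (t + j) * h (t + j))"
      by (intro sum_mono weight)
    then show ?thesis using tail[of M] by linarith
  qed
  have h_tail: "(\<Sum>t<M. h (t + j)) \<le> R" for M
  proof -
    have "(\<Sum>t<M. h (t + j)) \<le> (\<Sum>t<M. real (Suc (t + j)) * h (t + j))"
      by (intro sum_mono weight)
    then show ?thesis using moment_tail[of M] by linarith
  qed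
  show "(\<Sum>t<j. h t) \<le> (\<Sum>t. h t)" and "(\<Sum>t. h t) \<le> (\<Sum>t<j. h t) + R"
    using suminf_initial_segment_bounds[OF h_nonneg h_tail] by simp_all
  show "(\<Sum>t<j. real (Suc t) * h t) \<le> (\<Sum>t. real (Suc t) * h t)"
    and "(\<Sum>t. real (Suc t) * h t) \<le> (\<Sum>t<j. real (Suc t) * h t) + R"
    using suminf_initial_segment_bounds[of "\<lambda>t. real (Suc t) * h t", OF _ moment_tail] h_nonneg
    by simp_all
qed

lemma sum_le_with_few_exceptions:
  fixes f w :: "'a \<Rightarrow> real"
  assumes "finite A" and "card {k \<in> A. P k} \<le> K" and "0 \<le> c"
    and "\<And>k. k \<in> A \<Longrightarrow> f k \<le> e * w k + (if P k then c else 0)"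
  shows "(\<Sum>k\<in>A. f k) \<le> e * (\<Sum>k\<in>A. w k) + real K * c"
proof -
  have "(\<Sum>k\<in>A. f k) \<le> (\<Sum>k\<in>A. e * w k + (if P k then c else 0))"
    using assms(4) by (rule sum_mono)
  also have "\<dots> = e * (\<Sum>k\<in>A. w k) + real (card {k \<in> A. P k}) * c"
    using \<open>finite A\<close> by (simp add: sum.distrib sum_distrib_left sum.inter_filter[symmetric])
  also have "\<dots> \<le> e * (\<Sum>k\<in>A. w k) + real K * c"
    using assms(2,3) by (simp add: mult_right_mono)
  finally show ?thesis .
qed

section \<open>The binomial kernel\<close>

definition binom_kernel :: "real \<Rightarrow> nat \<Rightarrow> nat \<Rightarrow> nat \<Rightarrow> real" where
  "binom_kernel q N m k = real (N choose k) * (1 - q ^ (if m = 0 then N else m)) ^ k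
     * (q ^ (if m = 0 then N else m)) ^ (N - k)"

lemma trans_prob_eq_binom_kernel:
  assumes "0 \<le> q" "q \<le> 1"
  shows "trans_prob (1 - q) N = binom_kernel q N"
proof (intro ext)
  fix m k
  have "0 \<le> q ^ (if m = 0 then N else m)" "q ^ (if m = 0 then N else m) \<le> 1"
    using assms by (auto intro: power_le_one)
  then show "trans_prob (1 - q) N m k = binom_kernel q N m k"
    unfolding trans_prob_def binom_kernel_def by (subst pmf_binomial) auto
qed

lemma first_hit_at_eq_taboo_prob_interior:
  assumes "0 \<le> q" "q \<le> 1" "{a, b} = {0, N}"
  shows "first_hit_at (1 - q) N a b (Suc n) = taboo_prob (binom_kernel q N) {1..<N} a n N"
proof -
  have "{0..N} - {a, b} = {1..<N}" using assms(3) by auto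
  then show ?thesis
    unfolding first_hit_at_eq_taboo_prob using assms(1,2) by (simp add: trans_prob_eq_binom_kernel)
qed

lemma binom_kernel_nonneg: "0 \<le> q \<Longrightarrow> q \<le> 1 \<Longrightarrow> 0 \<le> binom_kernel q N m k"
  unfolding binom_kernel_def by (intro mult_nonneg_nonneg zero_le_power) (auto intro: power_le_one)

lemma binom_kernel_sum: "(\<Sum>k\<le>N. binom_kernel q N m k) = 1"
proof -
  let ?s = "q ^ (if m = 0 then N else m)"
  have "(\<Sum>k\<le>N. binom_kernel q N m k) = ((1 - ?s) + ?s) ^ N"
    unfolding binom_kernel_def binomial_ring by simp
  then show ?thesis by simp
qed

lemma binom_kernel_interior_sum_le:
  assumes "0 \<le> q" "q \<le> 1"
  shows "(\<Sum>k\<in>{1..<N}. binom_kernel q N x k) \<le> 1 - binom_kernel q N x N"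
proof -
  have "(\<Sum>k\<in>insert N {1..<N}. binom_kernel q N x k) \<le> (\<Sum>k\<le>N. binom_kernel q N x k)"
    using assms by (intro sum_mono2) (auto intro: binom_kernel_nonneg)
  then show ?thesis by (simp add: binom_kernel_sum)
qed

lemma binom_kernel_to_top: "x \<noteq> 0 \<Longrightarrow> binom_kernel q N x N = (1 - q ^ x) ^ N"
  unfolding binom_kernel_def by simp

lemma binom_kernel_to_zero: "x \<noteq> 0 \<Longrightarrow> binom_kernel q N x 0 = q ^ (x * N)"
  unfolding binom_kernel_def by (simp add: power_mult)

lemma binom_kernel_mult_power:
  assumes "x \<noteq> 0" "x \<le> N" "k \<le> N"
  shows "binom_kernel q N x k * q ^ (k * N)
           = q ^ (x * N) * (real (N choose k) * ((1 - q ^ x) * q ^ (N - x)) ^ k)"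
proof -
  have "x * (N - k) + k * N = x * N + (N - x) * k"
    using assms by (simp add: diff_mult_distrib diff_mult_distrib2 algebra_simps)
  then have "(q ^ x) ^ (N - k) * q ^ (k * N) = q ^ (x * N) * (q ^ (N - x)) ^ k"
    by (metis power_add power_mult)
  then show ?thesis
    unfolding binom_kernel_def using assms(1)
    by (simp add: power_mult_distrib mult_ac)
qed

section \<open>Binomial estimates\<close>

lemma binomial_interior_sum:
  assumes "1 \<le> N"
  shows "(\<Sum>k\<in>{1..<N}. real (N choose k) * y ^ k) = (1 + y) ^ N - 1 - y ^ N"
proof -
  have "{..N} = insert 0 (insert N {1..<N})" using assms by auto
  then have "(\<Sum>k\<le>N. real (N choose k) * y ^ k)
      = 1 + (y ^ N + (\<Sum>k\<in>{1..<N}. real (N choose k) * y ^ k))"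
    using assms by simp
  moreover have "(1 + y) ^ N = (\<Sum>k\<le>N. real (N choose k) * y ^ k)"
    using binomial_ring[of y 1 N] by (simp add: add.commute)
  ultimately show ?thesis by simp
qed

lemma binomial_interior_sum_le:
  assumes "0 \<le> y" "y \<le> X"
  shows "(\<Sum>k\<in>{1..<N}. real (N choose k) * y ^ k) \<le> (1 + X) ^ N - 1"
proof (cases "N = 0")
  case False
  then have "1 \<le> N" by simp
  moreover have "(1 + y) ^ N \<le> (1 + X) ^ N" using assms by (intro power_mono) auto
  ultimately show ?thesis
    using binomial_interior_sum[of N y] zero_le_power[OF assms(1), of N] by simp
qed simp

lemma choose_le_power_near_edge:
  assumes "0 < N" "k \<le> N" "k \<le> K \<or> N - k \<le> K"
  shows "real (N choose k) \<le> real N ^ K"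
proof -
  have "N choose k \<le> N ^ min k (N - k)"
    using binomial_le_pow[of k N] binomial_le_pow[of "N - k" N] binomial_symmetric[OF assms(2)]
    by (auto simp: min_def)
  also have "\<dots> \<le> N ^ K"
    using assms by (intro power_increasing) auto
  finally show ?thesis
    by (metis of_nat_le_iff of_nat_power)
qed

lemma power_minus_one_ge:
  assumes "0 \<le> (X::real)" "1 \<le> N"
  shows "X * (1 + X) ^ (N - 1) \<le> (1 + X) ^ N - 1"
proof -
  have "(1 + X) ^ N = (1 + X) * (1 + X) ^ (N - 1)"
    using assms(2) by (metis Suc_diff_le diff_Suc_1 power_Suc)
  moreover have "1 \<le> (1 + X) ^ (N - 1)" using assms by (intro one_le_power) auto
  ultimately show ?thesis by (simp add: algebra_simps)
qed

lemma one_minus_power_le: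
  assumes "0 \<le> (v::real)" "v \<le> 1"
  shows "1 - (1 - v) ^ N \<le> (1 + v) ^ N - 1"
proof -
  have "1 + real N * (- v) \<le> (1 + (- v)) ^ N" using assms by (intro Bernoulli_inequality) auto
  moreover have "1 + real N * v \<le> (1 + v) ^ N" using assms by (intro Bernoulli_inequality) auto
  ultimately show ?thesis by simp
qed

text \<open>The exchange \<open>X (1 + q) \<le> q (1 + X)\<close> moves all but one factor \<open>X\<close> onto \<open>q\<close>.\<close>

lemma power_exchange_le:
  assumes "0 \<le> (X::real)" "X \<le> q" "1 \<le> k" "k \<le> N"
  shows "X ^ k * (1 + q) ^ N \<le> X * (1 + X) ^ (N - 1) * (q ^ (k - 1) * (1 + q) ^ (N - k + 1))"
proof -
  have "X ^ k = X * X ^ (k - 1)"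
    using assms(3) by (metis Suc_diff_le diff_Suc_1 power_Suc)
  moreover have "(1 + q) ^ N = (1 + q) ^ (k - 1) * (1 + q) ^ (N - k + 1)"
  proof -
    have "k - 1 + (N - k + 1) = N" using assms(3,4) by simp
    then show ?thesis by (metis power_add)
  qed
  ultimately have "X ^ k * (1 + q) ^ N = X * (X * (1 + q)) ^ (k - 1) * (1 + q) ^ (N - k + 1)"
    by (simp add: power_mult_distrib mult_ac)
  also have "\<dots> \<le> X * (q ^ (k - 1) * (1 + X) ^ (N - 1)) * (1 + q) ^ (N - k + 1)"
  proof -
    have "(X * (1 + q)) ^ (k - 1) \<le> (q * (1 + X)) ^ (k - 1)"
      using assms by (intro power_mono) (auto simp: algebra_simps)
    also have "\<dots> = q ^ (k - 1) * (1 + X) ^ (k - 1)" by (simp add: power_mult_distrib)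
    also have "\<dots> \<le> q ^ (k - 1) * (1 + X) ^ (N - 1)"
      using assms by (intro mult_left_mono power_increasing) auto
    finally show ?thesis using assms by (intro mult_right_mono mult_left_mono) auto
  qed
  finally show ?thesis by (simp add: mult_ac)
qed

section \<open>Reaching the bottom first\<close>

text \<open>Error terms for the next states at distance at least \<open>K\<close> from \<open>N\<close> (the bulk) and for the
  \<open>K\<close> states nearest to \<open>N\<close> (the edge).\<close>

definition bulk_err :: "real \<Rightarrow> nat \<Rightarrow> nat \<Rightarrow> real" where
  "bulk_err q N K = (1 + q ^ K) ^ N - 1"

definition edge_err :: "real \<Rightarrow> nat \<Rightarrow> nat \<Rightarrow> real" where
  "edge_err q N K = real K * real N ^ K * 2 ^ (K + 1) * q ^ (N - K - 1)"

text \<open>\<open>q^(x N)\<close> is the probability of jumping from \<open>x\<close> straight to \<open>0\<close>.\<close>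

definition lyap_bottom :: "real \<Rightarrow> nat \<Rightarrow> nat \<Rightarrow> real" where
  "lyap_bottom q N x = q ^ (x * N) * (2 + 8 * ((1 + q ^ (N - x)) ^ N - 1))"

lemma bulk_err_nonneg: "0 \<le> q \<Longrightarrow> 0 \<le> bulk_err q N K"
  unfolding bulk_err_def by (simp add: one_le_power)

lemma power_minus_one_le_bulk_err:
  "0 \<le> q \<Longrightarrow> q \<le> 1 \<Longrightarrow> K \<le> m \<Longrightarrow> (1 + q ^ m) ^ N - 1 \<le> bulk_err q N K"
  unfolding bulk_err_def by (simp add: power_mono power_decreasing)

lemma edge_term_le:
  assumes q: "0 < q" "q < 1" and "0 \<le> y" "y \<le> X" "X \<le> q"
    and k: "1 \<le> k" "k < N" "N - K \<le> k"
  shows "real (N choose k) * y ^ k * ((1 + q ^ (N - k)) ^ N - 1)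
           \<le> real N ^ K * 2 ^ (K + 1) * q ^ (N - K - 1) * ((1 + X) ^ N - 1)"
proof -
  have X: "0 \<le> X" using assms by linarith
  have binom: "real (N choose k) \<le> real N ^ K"
    using k by (intro choose_le_power_near_edge) auto
  have g: "(1 + q ^ (N - k)) ^ N - 1 \<le> (1 + q) ^ N"
  proof -
    have "q ^ (N - k) \<le> q" using q k by (intro power_decreasing[of 1 "N - k" q, simplified]) auto
    then have "(1 + q ^ (N - k)) ^ N \<le> (1 + q) ^ N" using q by (intro power_mono) auto
    then show ?thesis by simp
  qed
  have tail: "q ^ (k - 1) * (1 + q) ^ (N - k + 1) \<le> q ^ (N - K - 1) * 2 ^ (K + 1)"
  proof (intro mult_mono)
    show "q ^ (k - 1) \<le> q ^ (N - K - 1)" using q k by (intro power_decreasing) auto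
    have "(1 + q) ^ (N - k + 1) \<le> (1 + q) ^ (K + 1)" using q k by (intro power_increasing) auto
    also have "\<dots> \<le> 2 ^ (K + 1)" using q by (intro power_mono) auto
    finally show "(1 + q) ^ (N - k + 1) \<le> 2 ^ (K + 1)" .
  qed (use q in auto)
  have "real (N choose k) * y ^ k * ((1 + q ^ (N - k)) ^ N - 1) \<le> real N ^ K * (X ^ k * (1 + q) ^ N)"
  proof -
    have "y ^ k \<le> X ^ k" using assms by (intro power_mono) auto
    moreover have "0 \<le> (1 + q ^ (N - k)) ^ N - 1" using q by (simp add: one_le_power)
    ultimately show ?thesis
      using mult_mono[OF mult_mono[OF binom \<open>y ^ k \<le> X ^ k\<close>] g] X q assms(3)
      by (simp add: mult_ac)
  qed
  also have "\<dots> \<le> real N ^ K * (X * (1 + X) ^ (N - 1) * (q ^ (k - 1) * (1 + q) ^ (N - k + 1)))"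
    using power_exchange_le[OF X \<open>X \<le> q\<close>, of k N] k by (intro mult_left_mono) auto
  also have "\<dots> \<le> real N ^ K * (((1 + X) ^ N - 1) * (q ^ (N - K - 1) * 2 ^ (K + 1)))"
    using power_minus_one_ge[OF X, of N] k X q
    by (intro mult_left_mono mult_mono tail) (auto simp: one_le_power)
  finally show ?thesis by (simp only: mult_ac)
qed

lemma card_near_top_le: "card {k \<in> {1..<N}. N - K \<le> k} \<le> K"
proof -
  have "card {k \<in> {1..<N}. N - K \<le> k} \<le> card {N - K..<N}" by (intro card_mono) auto
  then show ?thesis by simp
qed

lemma bulk_edge_sum_le:
  assumes q: "0 < q" "q < 1" and y: "0 \<le> y" "y \<le> X" and "X \<le> q"
  shows "(\<Sum>k\<in>{1..<N}. real (N choose k) * y ^ k * ((1 + q ^ (N - k)) ^ N - 1))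
           \<le> (bulk_err q N K + edge_err q N K) * ((1 + X) ^ N - 1)"
proof -
  define A where "A = (1 + X) ^ N - 1"
  define c where "c = real N ^ K * 2 ^ (K + 1) * q ^ (N - K - 1)"
  have A: "0 \<le> A" unfolding A_def using y by (simp add: one_le_power)
  have "(\<Sum>k\<in>{1..<N}. real (N choose k) * y ^ k * ((1 + q ^ (N - k)) ^ N - 1))
      \<le> bulk_err q N K * (\<Sum>k\<in>{1..<N}. real (N choose k) * y ^ k) + real K * (c * A)"
  proof (rule sum_le_with_few_exceptions[where P = "\<lambda>k. N - K \<le> k"])
    show "card {k \<in> {1..<N}. N - K \<le> k} \<le> K" by (rule card_near_top_le)
    show "0 \<le> c * A" using A q unfolding c_def by simp
    fix k assume k: "k \<in> {1..<N}"
    have w: "0 \<le> real (N choose k) * y ^ k" using y by simp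
    show "real (N choose k) * y ^ k * ((1 + q ^ (N - k)) ^ N - 1)
            \<le> bulk_err q N K * (real (N choose k) * y ^ k) + (if N - K \<le> k then c * A else 0)"
    proof (cases "N - K \<le> k")
      case True
      have "real (N choose k) * y ^ k * ((1 + q ^ (N - k)) ^ N - 1) \<le> c * A"
        using edge_term_le[OF q y \<open>X \<le> q\<close>, of k N K] k True unfolding c_def A_def by simp
      moreover have "0 \<le> bulk_err q N K * (real (N choose k) * y ^ k)"
        using q w by (simp add: bulk_err_nonneg)
      ultimately show ?thesis using True by simp
    next
      case False
      then have "(1 + q ^ (N - k)) ^ N - 1 \<le> bulk_err q N K"
        using q by (intro power_minus_one_le_bulk_err) auto
      from mult_right_mono[OF this w] show ?thesis using False by (simp add: mult_ac)
    qed
  qed simp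
  also have "\<dots> \<le> (bulk_err q N K + edge_err q N K) * A"
    using mult_left_mono[OF binomial_interior_sum_le[OF y, of N] bulk_err_nonneg[of q N K]] q
    unfolding edge_err_def c_def A_def by (simp add: algebra_simps)
  finally show ?thesis unfolding A_def .
qed

lemma lyap_bottom_super:
  assumes q: "0 < q" "q < 1" and small: "bulk_err q N K + edge_err q N K \<le> 1/4"
    and x: "x \<in> {1..<N}"
  shows "2 * (binom_kernel q N x 0 + (\<Sum>k\<in>{1..<N}. binom_kernel q N x k * lyap_bottom q N k))
           \<le> lyap_bottom q N x"
proof -
  define X where "X = q ^ (N - x)"
  define y where "y = (1 - q ^ x) * X"
  define A where "A = (1 + X) ^ N - 1"
  define g where "g k = (1 + q ^ (N - k)) ^ N - 1" for k
  have x0: "x \<noteq> 0" using x by auto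
  have X: "0 \<le> X" "X \<le> q"
    using q x unfolding X_def by (auto intro: power_decreasing[of 1 "N - x" q, simplified])
  have "0 \<le> 1 - q ^ x" "1 - q ^ x \<le> 1" using q by (auto simp: power_le_one)
  then have y: "0 \<le> y" "y \<le> X"
    using X unfolding y_def by (auto intro: mult_left_le_one_le)
  have A: "0 \<le> A" unfolding A_def using X by (simp add: one_le_power)
  have terms: "binom_kernel q N x k * lyap_bottom q N k
                 = q ^ (x * N) * (real (N choose k) * y ^ k * (2 + 8 * g k))"
    if "k \<in> {1..<N}" for k
    using binom_kernel_mult_power[of x N k q] x that
    unfolding lyap_bottom_def g_def y_def X_def by (simp add: mult_ac)
  have "(\<Sum>k\<in>{1..<N}. real (N choose k) * y ^ k * g k) \<le> (bulk_err q N K + edge_err q N K) * A"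
    using bulk_edge_sum_le[OF q y X(2)] unfolding g_def A_def .
  also have "\<dots> \<le> A / 4"
    using mult_right_mono[OF small A] by simp
  finally have sum_yg: "(\<Sum>k\<in>{1..<N}. real (N choose k) * y ^ k * g k) \<le> A / 4" .
  have "(\<Sum>k\<in>{1..<N}. binom_kernel q N x k * lyap_bottom q N k)
      = (\<Sum>k\<in>{1..<N}. q ^ (x * N) * (real (N choose k) * y ^ k * (2 + 8 * g k)))"
    by (rule sum.cong[OF refl terms])
  also have "\<dots> = q ^ (x * N) * (\<Sum>k\<in>{1..<N}. 2 * (real (N choose k) * y ^ k)
                                           + 8 * (real (N choose k) * y ^ k * g k))"
    by (simp add: sum_distrib_left distrib_left mult_ac)
  also have "\<dots> = q ^ (x * N) * (2 * (\<Sum>k\<in>{1..<N}. real (N choose k) * y ^ k)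
                       + 8 * (\<Sum>k\<in>{1..<N}. real (N choose k) * y ^ k * g k))"
    by (simp add: sum.distrib sum_distrib_left)
  also have "\<dots> \<le> q ^ (x * N) * (4 * A)"
    using binomial_interior_sum_le[OF y, of N] sum_yg q unfolding A_def by (intro mult_left_mono) auto
  finally show ?thesis
    using binom_kernel_to_zero[OF x0, of q N]
    unfolding lyap_bottom_def A_def X_def by (simp add: algebra_simps)
qed

lemma bottom_two_step_sum:
  assumes "1 \<le> N"
  shows "(\<Sum>z\<in>{1..<N}. binom_kernel q N N z * binom_kernel q N z 0)
           = q ^ (N * N) * ((2 - q ^ N) ^ N - 1 - (1 - q ^ N) ^ N)"
proof -
  have "binom_kernel q N N z * binom_kernel q N z 0 = q ^ (N * N) * (real (N choose z) * (1 - q ^ N) ^ z)"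
    if "z \<in> {1..<N}" for z
    using binom_kernel_mult_power[of N N z q] binom_kernel_to_zero[of z q N] assms that by simp
  then have "(\<Sum>z\<in>{1..<N}. binom_kernel q N N z * binom_kernel q N z 0)
      = q ^ (N * N) * (\<Sum>z\<in>{1..<N}. real (N choose z) * (1 - q ^ N) ^ z)"
    by (simp add: sum_distrib_left)
  then show ?thesis
    using binomial_interior_sum[OF assms, of "1 - q ^ N"] by simp
qed

lemma choose_bulk_edge_sum_le:
  assumes q: "0 < q" "q < 1"
  shows "(\<Sum>z\<in>{1..<N}. real (N choose z) * ((1 + q ^ (N - z)) ^ N - 1))
           \<le> bulk_err q N K * 2 ^ N + real K * real N ^ K * (1 + q) ^ N"
proof -
  have "(\<Sum>z\<in>{1..<N}. real (N choose z) * ((1 + q ^ (N - z)) ^ N - 1))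
      \<le> bulk_err q N K * (\<Sum>z\<in>{1..<N}. real (N choose z)) + real K * (real N ^ K * (1 + q) ^ N)"
  proof (rule sum_le_with_few_exceptions[where P = "\<lambda>z. N - K \<le> z"])
    show "card {k \<in> {1..<N}. N - K \<le> k} \<le> K" by (rule card_near_top_le)
    fix z assume z: "z \<in> {1..<N}"
    have w: "0 \<le> bulk_err q N K * real (N choose z)" using q by (simp add: bulk_err_nonneg)
    show "real (N choose z) * ((1 + q ^ (N - z)) ^ N - 1)
            \<le> bulk_err q N K * real (N choose z) + (if N - K \<le> z then real N ^ K * (1 + q) ^ N else 0)"
    proof (cases "N - K \<le> z")
      case True
      have "q ^ (N - z) \<le> q" using q z by (intro power_decreasing[of 1 "N - z" q, simplified]) auto
      then have "(1 + q ^ (N - z)) ^ N \<le> (1 + q) ^ N" using q by (intro power_mono) auto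
      then have "(1 + q ^ (N - z)) ^ N - 1 \<le> (1 + q) ^ N" by simp
      then have "real (N choose z) * ((1 + q ^ (N - z)) ^ N - 1) \<le> real N ^ K * (1 + q) ^ N"
        using True z q by (intro mult_mono choose_le_power_near_edge) (auto simp: one_le_power)
      then show ?thesis using True w by simp
    next
      case False
      then have "(1 + q ^ (N - z)) ^ N - 1 \<le> bulk_err q N K"
        using q by (intro power_minus_one_le_bulk_err) auto
      then have "real (N choose z) * ((1 + q ^ (N - z)) ^ N - 1) \<le> real (N choose z) * bulk_err q N K"
        by (intro mult_left_mono) auto
      then show ?thesis using False by (simp add: mult.commute)
    qed
  qed (use q in simp_all)
  also have "\<dots> \<le> bulk_err q N K * 2 ^ N + real K * real N ^ K * (1 + q) ^ N"
  proof -
    have "(\<Sum>z\<in>{1..<N}. real (N choose z)) \<le> (\<Sum>z\<le>N. real (N choose z))"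
      by (intro sum_mono2) auto
    also have "\<dots> = 2 ^ N" by (simp flip: of_nat_sum add: choose_row_sum)
    finally have "bulk_err q N K * (\<Sum>z\<in>{1..<N}. real (N choose z)) \<le> bulk_err q N K * 2 ^ N"
      using q by (intro mult_left_mono bulk_err_nonneg) auto
    then show ?thesis by (simp add: mult_ac)
  qed
  finally show ?thesis .
qed

lemma bottom_tail_le:
  assumes q: "0 < q" "q < 1"
  shows "(\<Sum>z\<in>{1..<N}. binom_kernel q N N z * (lyap_bottom q N z - 2 * binom_kernel q N z 0))
           \<le> 8 * q ^ (N * N) * (bulk_err q N K * 2 ^ N + real K * real N ^ K * (1 + q) ^ N)"
proof -
  define g where "g z = (1 + q ^ (N - z)) ^ N - 1" for z
  have g: "0 \<le> g z" for z unfolding g_def using q by (simp add: one_le_power)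
  have terms: "binom_kernel q N N z * (lyap_bottom q N z - 2 * binom_kernel q N z 0)
                 \<le> 8 * q ^ (N * N) * (real (N choose z) * g z)"
    if z: "z \<in> {1..<N}" for z
  proof -
    have "binom_kernel q N N z * (lyap_bottom q N z - 2 * binom_kernel q N z 0)
        = 8 * g z * (binom_kernel q N N z * q ^ (z * N))"
      using z unfolding lyap_bottom_def g_def by (simp add: binom_kernel_to_zero algebra_simps)
    also have "\<dots> = 8 * g z * (q ^ (N * N) * (real (N choose z) * (1 - q ^ N) ^ z))"
      using z binom_kernel_mult_power[of N N z q] by simp
    also have "\<dots> \<le> 8 * g z * (q ^ (N * N) * real (N choose z))"
      using q g[of z] by (intro mult_left_mono mult_right_le_one_le power_le_one) (auto simp: power_le_one)
    finally show ?thesis by (simp add: mult_ac)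
  qed
  have "(\<Sum>z\<in>{1..<N}. binom_kernel q N N z * (lyap_bottom q N z - 2 * binom_kernel q N z 0))
      \<le> (\<Sum>z\<in>{1..<N}. 8 * q ^ (N * N) * (real (N choose z) * g z))"
    by (rule sum_mono) (rule terms)
  also have "\<dots> = 8 * q ^ (N * N) * (\<Sum>z\<in>{1..<N}. real (N choose z) * g z)"
    by (simp add: sum_distrib_left)
  also have "\<dots> \<le> 8 * q ^ (N * N) * (bulk_err q N K * 2 ^ N + real K * real N ^ K * (1 + q) ^ N)"
    using choose_bulk_edge_sum_le[OF q, of N K] q unfolding g_def by (intro mult_left_mono) auto
  finally show ?thesis .
qed

lemma hit_bottom_bounds:
  assumes q: "0 < q" "q < 1" and "K < N" and small: "bulk_err q N K + edge_err q N K \<le> 1/4"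
  defines "R \<equiv> 8 * q ^ (N * N) * (bulk_err q N K * 2 ^ N + real K * real N ^ K * (1 + q) ^ N)"
  shows "q ^ (N * N) * ((2 - q ^ N) ^ N - (1 - q ^ N) ^ N) \<le> hit_before (1 - q) N 0 N"
    and "hit_before (1 - q) N 0 N \<le> q ^ (N * N) * ((2 - q ^ N) ^ N - (1 - q ^ N) ^ N) + R"
    and "q ^ (N * N) * (2 * (2 - q ^ N) ^ N - 2 * (1 - q ^ N) ^ N - 1)
           \<le> hit_time_mass (1 - q) N 0 N"
    and "hit_time_mass (1 - q) N 0 N
           \<le> q ^ (N * N) * (2 * (2 - q ^ N) ^ N - 2 * (1 - q ^ N) ^ N - 1) + R"
proof -
  define h where "h t = taboo_prob (binom_kernel q N) {1..<N} 0 t N" for t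
  have N: "1 \<le> N" using \<open>K < N\<close> by simp
  have first_hit: "first_hit_at (1 - q) N 0 N (Suc t) = h t" for t
    unfolding h_def using q by (intro first_hit_at_eq_taboo_prob_interior) auto
  have T: "0 \<le> binom_kernel q N x y" for x y using q by (intro binom_kernel_nonneg) auto
  have h: "0 \<le> h t" for t unfolding h_def by (rule taboo_prob_nonneg[OF T])
  have u: "0 \<le> lyap_bottom q N x" for x
  proof -
    have "0 \<le> (1 + q ^ (N - x)) ^ N - 1"
      using bulk_err_nonneg[of q N "N - x"] q unfolding bulk_err_def by simp
    then show ?thesis
      using q unfolding lyap_bottom_def by (intro mult_nonneg_nonneg add_nonneg_nonneg) auto
  qed
  have tail: "(\<Sum>t<M. 2 ^ (t + 2) * h (t + 2)) \<le> R" for M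
  proof -
    have "(\<Sum>t<M. 2 ^ (t + 2) * h (t + 2))
        \<le> (\<Sum>z\<in>{1..<N}. binom_kernel q N N z * (lyap_bottom q N z - 2 * binom_kernel q N z 0))"
      using taboo_prob_weighted_tail2_le[OF T _ u lyap_bottom_super[OF q small], of N M]
      unfolding h_def by simp
    also have "\<dots> \<le> R" unfolding R_def by (rule bottom_tail_le[OF q])
    finally show ?thesis .
  qed
  have "h 0 = q ^ (N * N)" unfolding h_def using binom_kernel_to_zero[of N q N] N by simp
  moreover have "h 1 = q ^ (N * N) * ((2 - q ^ N) ^ N - 1 - (1 - q ^ N) ^ N)"
    unfolding h_def using bottom_two_step_sum[OF N, of q] by simp
  ultimately have "(\<Sum>t<2. h t) = q ^ (N * N) * ((2 - q ^ N) ^ N - (1 - q ^ N) ^ N)"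
    and "(\<Sum>t<2. real (Suc t) * h t) = q ^ (N * N) * (2 * (2 - q ^ N) ^ N - 2 * (1 - q ^ N) ^ N - 1)"
    by (simp_all add: numeral_2_eq_2 algebra_simps)
  moreover have "hit_before (1 - q) N 0 N = (\<Sum>t. h t)"
    and "hit_time_mass (1 - q) N 0 N = (\<Sum>t. real (Suc t) * h t)"
    unfolding hit_before_def hit_time_mass_def first_hit by simp_all
  ultimately show "q ^ (N * N) * ((2 - q ^ N) ^ N - (1 - q ^ N) ^ N) \<le> hit_before (1 - q) N 0 N"
    and "hit_before (1 - q) N 0 N \<le> q ^ (N * N) * ((2 - q ^ N) ^ N - (1 - q ^ N) ^ N) + R"
    and "q ^ (N * N) * (2 * (2 - q ^ N) ^ N - 2 * (1 - q ^ N) ^ N - 1)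
           \<le> hit_time_mass (1 - q) N 0 N"
    and "hit_time_mass (1 - q) N 0 N
           \<le> q ^ (N * N) * (2 * (2 - q ^ N) ^ N - 2 * (1 - q ^ N) ^ N - 1) + R"
    using first_moment_series_bounds[OF h tail] by simp_all
qed

section \<open>Returning to the top first\<close>

definition lyap_top :: "nat \<Rightarrow> nat \<Rightarrow> real" where
  "lyap_top K x = (if K \<le> x then 4 else 12)"

lemma binom_kernel_le_near_zero:
  assumes q: "0 < q" "q < 1" and "x \<noteq> 0" "0 < N" "k \<le> N" "k \<le> K"
  shows "binom_kernel q N x k \<le> real N ^ K * q ^ (N - K)"
proof -
  have "real (N choose k) \<le> real N ^ K" using assms by (intro choose_le_power_near_edge) auto
  moreover have "(1 - q ^ x) ^ k \<le> 1" using q by (intro power_le_one) (auto simp: power_le_one)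
  moreover have "(q ^ x) ^ (N - k) \<le> q ^ (N - K)"
  proof -
    have "q ^ x \<le> q" using assms by (intro power_decreasing[of 1 x q, simplified]) auto
    then have "(q ^ x) ^ (N - k) \<le> q ^ (N - k)" using q by (intro power_mono) auto
    also have "\<dots> \<le> q ^ (N - K)" using assms by (intro power_decreasing) auto
    finally show ?thesis .
  qed
  ultimately have "real (N choose k) * (1 - q ^ x) ^ k * (q ^ x) ^ (N - k) \<le> real N ^ K * 1 * q ^ (N - K)"
    using q by (intro mult_mono) (auto simp: power_le_one)
  then show ?thesis unfolding binom_kernel_def using \<open>x \<noteq> 0\<close> by simp
qed

lemma edge_err_ge:
  assumes "0 < q" "q < 1"
  shows "real K * (real N ^ K * q ^ (N - K)) \<le> edge_err q N K"
proof -
  have "q ^ (N - K) \<le> q ^ (N - K - 1)" using assms by (intro power_decreasing) auto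
  also have "\<dots> \<le> 2 ^ (K + 1) * q ^ (N - K - 1)"
  proof -
    have "(1::real) \<le> 2 ^ (K + 1)" by (rule one_le_power) simp
    from mult_right_mono[OF this, of "q ^ (N - K - 1)"] show ?thesis using assms by simp
  qed
  finally have "real N ^ K * q ^ (N - K) \<le> real N ^ K * (2 ^ (K + 1) * q ^ (N - K - 1))"
    by (rule mult_left_mono) simp
  from mult_left_mono[OF this, of "real K"] show ?thesis unfolding edge_err_def by (simp add: mult_ac)
qed

lemma lyap_top_super:
  assumes q: "0 < q" "q < 1"
    and bulk: "bulk_err q N K \<le> 1/12" and edge: "edge_err q N K \<le> 1/12"
    and x: "x \<in> {1..<N}"
  shows "2 * (binom_kernel q N x N + (\<Sum>k\<in>{1..<N}. binom_kernel q N x k * lyap_top K k))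
           \<le> lyap_top K x"
proof -
  have x0: "x \<noteq> 0" using x by simp
  have T: "0 \<le> binom_kernel q N x k" for k using q by (intro binom_kernel_nonneg) auto
  have top: "binom_kernel q N x N \<le> 1"
    unfolding binom_kernel_to_top[OF x0] using q by (intro power_le_one) (auto simp: power_le_one)
  have interior: "(\<Sum>k\<in>{1..<N}. binom_kernel q N x k) \<le> 1 - binom_kernel q N x N"
    using q by (intro binom_kernel_interior_sum_le) auto
  show ?thesis
  proof (cases "K \<le> x")
    case True
    have "1 - binom_kernel q N x N \<le> (1 + q ^ x) ^ N - 1"
      unfolding binom_kernel_to_top[OF x0] using q by (intro one_minus_power_le) (auto simp: power_le_one)
    also have "\<dots> \<le> bulk_err q N K" using q True by (intro power_minus_one_le_bulk_err) auto
    finally have "(\<Sum>k\<in>{1..<N}. binom_kernel q N x k) \<le> bulk_err q N K" using interior by simp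
    moreover have "(\<Sum>k\<in>{1..<N}. binom_kernel q N x k * lyap_top K k)
                     \<le> 12 * (\<Sum>k\<in>{1..<N}. binom_kernel q N x k)"
      unfolding sum_distrib_left using T by (intro sum_mono) (auto simp: lyap_top_def)
    ultimately show ?thesis using bulk top True by (simp add: lyap_top_def)
  next
    case False
    have "(\<Sum>k\<in>{1..<N}. binom_kernel q N x k * lyap_top K k)
        \<le> 4 * (\<Sum>k\<in>{1..<N}. binom_kernel q N x k) + real K * (8 * (real N ^ K * q ^ (N - K)))"
    proof (rule sum_le_with_few_exceptions[where P = "\<lambda>k. k < K"])
      have "card {k \<in> {1..<N}. k < K} \<le> card {..<K}" by (intro card_mono) auto
      then show "card {k \<in> {1..<N}. k < K} \<le> K" by simp
      fix k assume "k \<in> {1..<N}"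
      then show "binom_kernel q N x k * lyap_top K k
                   \<le> 4 * binom_kernel q N x k + (if k < K then 8 * (real N ^ K * q ^ (N - K)) else 0)"
        using binom_kernel_le_near_zero[OF q x0, of N k K] T[of k] by (auto simp: lyap_top_def)
    qed (use q in simp_all)
    then show ?thesis
      using interior edge_err_ge[OF q, of K N] edge top T[of N] False by (simp add: lyap_top_def)
  qed
qed

lemma top_tail_le:
  assumes "0 \<le> q" "q \<le> 1"
  shows "(\<Sum>z\<in>{1..<N}. binom_kernel q N N z * lyap_top K z) \<le> 12 * (1 - (1 - q ^ N) ^ N)"
proof (cases "N = 0")
  case False
  have "(\<Sum>z\<in>{1..<N}. binom_kernel q N N z * lyap_top K z) \<le> 12 * (\<Sum>z\<in>{1..<N}. binom_kernel q N N z)"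
    unfolding sum_distrib_left using assms
    by (intro sum_mono) (auto simp: lyap_top_def intro: binom_kernel_nonneg)
  also have "\<dots> \<le> 12 * (1 - (1 - q ^ N) ^ N)"
    using binom_kernel_interior_sum_le[OF assms, of N N] binom_kernel_to_top[OF False, of q N] by simp
  finally show ?thesis .
qed simp

lemma hit_top_bounds:
  assumes q: "0 < q" "q < 1" and "K < N"
    and bulk: "bulk_err q N K \<le> 1/12" and edge: "edge_err q N K \<le> 1/12"
  shows "(1 - q ^ N) ^ N \<le> hit_before (1 - q) N N 0"
    and "hit_before (1 - q) N N 0 \<le> (1 - q ^ N) ^ N + 12 * (1 - (1 - q ^ N) ^ N)"
    and "(1 - q ^ N) ^ N \<le> hit_time_mass (1 - q) N N 0"
    and "hit_time_mass (1 - q) N N 0 \<le> (1 - q ^ N) ^ N + 12 * (1 - (1 - q ^ N) ^ N)"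
proof -
  define h where "h t = taboo_prob (binom_kernel q N) {1..<N} N t N" for t
  have N: "N \<noteq> 0" using \<open>K < N\<close> by simp
  have first_hit: "first_hit_at (1 - q) N N 0 (Suc t) = h t" for t
    unfolding h_def using q by (intro first_hit_at_eq_taboo_prob_interior) auto
  have T: "0 \<le> binom_kernel q N x y" for x y using q by (intro binom_kernel_nonneg) auto
  have h: "0 \<le> h t" for t unfolding h_def by (rule taboo_prob_nonneg[OF T])
  have tail: "(\<Sum>t<M. 2 ^ (t + 1) * h (t + 1)) \<le> 12 * (1 - (1 - q ^ N) ^ N)" for M
  proof -
    have "(\<Sum>t<M. 2 ^ (t + 1) * h (t + 1)) \<le> (\<Sum>z\<in>{1..<N}. binom_kernel q N N z * lyap_top K z)"
      using taboo_prob_weighted_tail_le[OF T _ _ lyap_top_super[OF q bulk edge], of N M]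
      unfolding h_def by (simp add: lyap_top_def)
    also have "\<dots> \<le> 12 * (1 - (1 - q ^ N) ^ N)" using q by (intro top_tail_le) auto
    finally show ?thesis .
  qed
  have "h 0 = (1 - q ^ N) ^ N" unfolding h_def using binom_kernel_to_top[OF N] by simp
  moreover have "hit_before (1 - q) N N 0 = (\<Sum>t. h t)"
    and "hit_time_mass (1 - q) N N 0 = (\<Sum>t. real (Suc t) * h t)"
    unfolding hit_before_def hit_time_mass_def first_hit by simp_all
  ultimately show "(1 - q ^ N) ^ N \<le> hit_before (1 - q) N N 0"
    and "hit_before (1 - q) N N 0 \<le> (1 - q ^ N) ^ N + 12 * (1 - (1 - q ^ N) ^ N)"
    and "(1 - q ^ N) ^ N \<le> hit_time_mass (1 - q) N N 0"
    and "hit_time_mass (1 - q) N N 0 \<le> (1 - q ^ N) ^ N + 12 * (1 - (1 - q ^ N) ^ N)"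
    using first_moment_series_bounds[of h 1, OF h tail] by simp_all
qed

section \<open>Asymptotics\<close>

definition cutoff :: "nat \<Rightarrow> nat" where
  "cutoff N = nat \<lfloor>sqrt (real N)\<rfloor>"

lemma cutoff_le: "real (cutoff N) \<le> sqrt (real N)"
  unfolding cutoff_def by simp

lemma cutoff_ge: "sqrt (real N) - 1 \<le> real (cutoff N)"
  unfolding cutoff_def by linarith

lemma cutoff_less: "2 \<le> N \<Longrightarrow> cutoff N < N"
proof -
  assume N: "2 \<le> N"
  have "sqrt (real N) < sqrt (real N * real N)" using N by (intro real_sqrt_less_mono) auto
  then have "real (cutoff N) < real N" using cutoff_le[of N] by simp
  then show ?thesis by simp
qed

lemma power_le_exp_of_ge_one:
  assumes "1 \<le> (a::real)" "real k \<le> s"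
  shows "a ^ k \<le> exp (s * ln a)"
proof -
  have "a ^ k = exp (real k * ln a)" using assms by (simp add: exp_of_nat_mult)
  also have "\<dots> \<le> exp (s * ln a)" using assms by (intro exp_mono mult_right_mono) auto
  finally show ?thesis .
qed

lemma power_le_exp_of_less_one:
  assumes "0 < (b::real)" "b < 1" "s \<le> real k"
  shows "b ^ k \<le> exp (s * ln b)"
proof -
  have "b ^ k = exp (real k * ln b)" using assms by (simp add: exp_of_nat_mult)
  also have "\<dots> \<le> exp (s * ln b)" using assms by (intro exp_mono mult_right_mono_neg) auto
  finally show ?thesis .
qed

lemma bulk_err_cutoff_tendsto:
  assumes q: "0 < q" "q < 1"
  shows "(\<lambda>N. bulk_err q N (cutoff N)) \<longlonglongrightarrow> 0"
proof (rule real_tendsto_sandwich[OF _ _ tendsto_const])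
  define c where "c = - ln q"
  have "0 < c" using q unfolding c_def by simp
  then have "(\<lambda>N::nat. real N * exp (- c * (sqrt (real N) - 1))) \<longlonglongrightarrow> 0" by real_asymp
  then show "(\<lambda>N. exp (real N * exp (- c * (sqrt (real N) - 1))) - 1) \<longlonglongrightarrow> 0"
    using tendsto_diff[OF tendsto_exp tendsto_const, of _ 0 sequentially 1] by simp
  show "\<forall>\<^sub>F N in sequentially. 0 \<le> bulk_err q N (cutoff N)"
    using q by (simp add: bulk_err_nonneg)
  show "\<forall>\<^sub>F N in sequentially. bulk_err q N (cutoff N) \<le> exp (real N * exp (- c * (sqrt (real N) - 1))) - 1"
  proof (intro always_eventually allI)
    fix N :: nat
    have "(1 + q ^ cutoff N) ^ N \<le> exp (q ^ cutoff N) ^ N"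
      using q by (intro power_mono) (auto simp: exp_ge_add_one_self add.commute)
    also have "\<dots> = exp (real N * q ^ cutoff N)" by (simp add: exp_of_nat_mult)
    also have "\<dots> \<le> exp (real N * exp (- c * (sqrt (real N) - 1)))"
      using power_le_exp_of_less_one[OF q cutoff_ge[of N]]
      unfolding c_def by (intro exp_mono mult_left_mono) (simp_all add: mult.commute)
    finally show "bulk_err q N (cutoff N) \<le> exp (real N * exp (- c * (sqrt (real N) - 1))) - 1"
      unfolding bulk_err_def by simp
  qed
qed

lemma edge_err_cutoff_tendsto:
  assumes q: "0 < q" "q < 1"
  shows "(\<lambda>N. edge_err q N (cutoff N)) \<longlonglongrightarrow> 0"
proof (rule real_tendsto_sandwich[OF _ _ tendsto_const])
  define c where "c = - ln q"
  define K where "K N = cutoff N" for N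
  have "0 < c" using q unfolding c_def by simp
  then show "(\<lambda>N::nat. sqrt N * exp (sqrt N * ln N) * (2 * exp (sqrt N * ln 2))
                         * exp (- c * (N - sqrt N - 1))) \<longlonglongrightarrow> 0"
    by real_asymp
  show "\<forall>\<^sub>F N in sequentially. 0 \<le> edge_err q N (cutoff N)"
    using q by (simp add: edge_err_def)
  show "\<forall>\<^sub>F N in sequentially. edge_err q N (cutoff N) \<le> sqrt N * exp (sqrt N * ln N)
          * (2 * exp (sqrt N * ln 2)) * exp (- c * (N - sqrt N - 1))"
    using eventually_ge_at_top[of 1]
  proof eventually_elim
    case (elim N)
    have "real N ^ K N \<le> exp (sqrt N * ln N)"
      using elim by (intro power_le_exp_of_ge_one) (auto simp: K_def cutoff_le)
    moreover have "(2::real) ^ (K N + 1) \<le> 2 * exp (sqrt N * ln 2)"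
      using power_le_exp_of_ge_one[of 2 "K N" "sqrt N"] by (simp add: K_def cutoff_le)
    moreover have "q ^ (N - K N - 1) \<le> exp (- c * (N - sqrt N - 1))"
    proof -
      have "real N - sqrt N - 1 \<le> real (N - K N - 1)"
        using cutoff_le[of N] by (cases "K N + 1 \<le> N") (auto simp: K_def of_nat_diff)
      from power_le_exp_of_less_one[OF q this] show ?thesis unfolding c_def by (simp add: mult.commute)
    qed
    ultimately show ?case
      using cutoff_le[of N] q unfolding edge_err_def K_def by (intro mult_mono) auto
  qed
qed

lemma cutoff_binomial_tendsto:
  assumes q: "0 < q" "q < 1"
  shows "(\<lambda>N. real (cutoff N) * real N ^ cutoff N * ((1 + q) / 2) ^ N) \<longlonglongrightarrow> 0"
proof (rule real_tendsto_sandwich[OF _ _ tendsto_const])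
  define r where "r = - ln ((1 + q) / 2)"
  have "0 < r" using q unfolding r_def by simp
  then show "(\<lambda>N::nat. sqrt N * exp (sqrt N * ln N) * exp (- r * N)) \<longlonglongrightarrow> 0"
    by real_asymp
  show "\<forall>\<^sub>F N in sequentially. 0 \<le> real (cutoff N) * real N ^ cutoff N * ((1 + q) / 2) ^ N"
    using q by simp
  show "\<forall>\<^sub>F N in sequentially. real (cutoff N) * real N ^ cutoff N * ((1 + q) / 2) ^ N
          \<le> sqrt N * exp (sqrt N * ln N) * exp (- r * N)"
    using eventually_ge_at_top[of 1]
  proof eventually_elim
    case (elim N)
    have "((1 + q) / 2) ^ N = exp (- r * N)"
    proof -
      have "exp (- r * N) = exp (real N * ln ((1 + q) / 2))" unfolding r_def by (simp add: mult.commute)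
      also have "\<dots> = ((1 + q) / 2) ^ N" using q by (simp add: exp_of_nat_mult)
      finally show ?thesis by simp
    qed
    moreover have "real N ^ cutoff N \<le> exp (sqrt N * ln N)"
      using elim by (intro power_le_exp_of_ge_one cutoff_le) auto
    ultimately show ?case using cutoff_le[of N] by (simp add: mult_mono)
  qed
qed

lemma eventually_cutoff_small:
  assumes q: "0 < q" "q < 1"
  shows "\<forall>\<^sub>F N in sequentially.
           cutoff N < N \<and> bulk_err q N (cutoff N) \<le> 1/12 \<and> edge_err q N (cutoff N) \<le> 1/12"
proof -
  have "\<forall>\<^sub>F N in sequentially. bulk_err q N (cutoff N) < 1/12"
    by (rule order_tendstoD(2)[OF bulk_err_cutoff_tendsto[OF q]]) simp
  moreover have "\<forall>\<^sub>F N in sequentially. edge_err q N (cutoff N) < 1/12"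
    by (rule order_tendstoD(2)[OF edge_err_cutoff_tendsto[OF q]]) simp
  moreover have "\<forall>\<^sub>F N in sequentially. cutoff N < N"
    using eventually_ge_at_top[of 2] by eventually_elim (rule cutoff_less)
  ultimately show ?thesis by eventually_elim auto
qed

lemma tendsto_between:
  fixes f l r :: "'a \<Rightarrow> real"
  assumes "\<forall>\<^sub>F x in F. l x \<le> f x \<and> f x \<le> l x + r x" and "(l \<longlongrightarrow> L) F" and "(r \<longlongrightarrow> 0) F"
  shows "(f \<longlongrightarrow> L) F"
proof (rule real_tendsto_sandwich[OF _ _ assms(2)])
  show "\<forall>\<^sub>F x in F. l x \<le> f x" and "\<forall>\<^sub>F x in F. f x \<le> l x + r x"
    using assms(1) by (auto elim: eventually_mono)
  show "((\<lambda>x. l x + r x) \<longlongrightarrow> L) F" using tendsto_add[OF assms(2,3)] by simp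
qed

lemma two_step_ratio_tendsto:
  assumes q: "0 < q" "q < (1::real)"
  shows "(\<lambda>N. ((2 - q ^ N) ^ N - (1 - q ^ N) ^ N) / 2 ^ N) \<longlonglongrightarrow> 1"
proof -
  have "(\<lambda>N. (2 - q ^ N) ^ N / 2 ^ N) \<longlonglongrightarrow> 1" using q by real_asymp
  moreover have "(\<lambda>N. (1 - q ^ N) ^ N / 2 ^ N) \<longlonglongrightarrow> 0"
  proof (rule real_tendsto_sandwich[OF _ _ tendsto_const LIMSEQ_power_zero[of "1/2::real"]])
    have "0 \<le> 1 - q ^ N" "1 - q ^ N \<le> 1" for N using q by (auto simp: power_le_one)
    then show "\<forall>\<^sub>F N in sequentially. 0 \<le> (1 - q ^ N) ^ N / 2 ^ N"
      and "\<forall>\<^sub>F N in sequentially. (1 - q ^ N) ^ N / 2 ^ N \<le> (1 / 2) ^ N"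
      by (auto simp: power_one_over intro!: always_eventually divide_right_mono power_le_one)
  qed simp_all
  ultimately have "(\<lambda>N. (2 - q ^ N) ^ N / 2 ^ N - (1 - q ^ N) ^ N / 2 ^ N) \<longlonglongrightarrow> 1 - 0"
    by (rule tendsto_diff)
  then show ?thesis unfolding diff_divide_distrib by simp
qed

lemma hit_bottom_limits:
  assumes q: "0 < q" "q < 1"
  shows "(\<lambda>N. hit_before (1 - q) N 0 N / (q ^ (N * N) * 2 ^ N)) \<longlonglongrightarrow> 1"
    and "(\<lambda>N. hit_time_mass (1 - q) N 0 N / (q ^ (N * N) * 2 ^ N)) \<longlonglongrightarrow> 2"
proof -
  define l where "l N = ((2 - q ^ N) ^ N - (1 - q ^ N) ^ N) / 2 ^ N" for N :: nat
  define r where "r N = 8 * (bulk_err q N (cutoff N)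
                   + real (cutoff N) * real N ^ cutoff N * ((1 + q) / 2) ^ N)" for N
  have l: "l \<longlonglongrightarrow> 1" unfolding l_def[abs_def] by (rule two_step_ratio_tendsto[OF q])
  have r: "r \<longlonglongrightarrow> 0"
    using tendsto_mult[OF tendsto_const tendsto_add[OF bulk_err_cutoff_tendsto[OF q]
            cutoff_binomial_tendsto[OF q]], of 8]
    unfolding r_def by simp
  have half: "(\<lambda>N. (1 / 2) ^ N :: real) \<longlonglongrightarrow> 0" by (rule LIMSEQ_power_zero) simp
  have bounds: "\<forall>\<^sub>F N in sequentially.
          (l N \<le> hit_before (1 - q) N 0 N / (q ^ (N * N) * 2 ^ N)
             \<and> hit_before (1 - q) N 0 N / (q ^ (N * N) * 2 ^ N) \<le> l N + r N)
        \<and> (2 * l N - (1 / 2) ^ N \<le> hit_time_mass (1 - q) N 0 N / (q ^ (N * N) * 2 ^ N)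
             \<and> hit_time_mass (1 - q) N 0 N / (q ^ (N * N) * 2 ^ N) \<le> 2 * l N - (1 / 2) ^ N + r N)"
    using eventually_cutoff_small[OF q]
  proof eventually_elim
    case (elim N)
    define B where "B = q ^ (N * N) * 2 ^ N"
    define R where "R = 8 * q ^ (N * N) * (bulk_err q N (cutoff N) * 2 ^ N
                          + real (cutoff N) * real N ^ cutoff N * (1 + q) ^ N)"
    have B: "0 < B" unfolding B_def using q by simp
    have scale: "a \<le> H / B \<and> H / B \<le> a + R / B" if "a * B \<le> H" "H \<le> a * B + R" for a H
      using that B by (simp add: field_simps)
    have "bulk_err q N (cutoff N) + edge_err q N (cutoff N) \<le> 1/4" using elim by simp
    note bounds = hit_bottom_bounds[OF q _ this, folded R_def]
    have "q ^ (N * N) * ((2 - q ^ N) ^ N - (1 - q ^ N) ^ N) = l N * B"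
      and "q ^ (N * N) * (2 * (2 - q ^ N) ^ N - 2 * (1 - q ^ N) ^ N - 1) = (2 * l N - (1 / 2) ^ N) * B"
      unfolding l_def B_def by (simp_all add: field_simps power_one_over)
    note scaled = scale[OF bounds(1,2)[unfolded this]] scale[OF bounds(3,4)[unfolded this]]
    have "r N = R / B"
      unfolding r_def R_def B_def using q by (simp add: field_simps power_divide)
    then show ?case using scaled elim unfolding B_def by simp
  qed
  have mass_lower: "(\<lambda>N. 2 * l N - (1 / 2) ^ N) \<longlonglongrightarrow> 2"
    using tendsto_diff[OF tendsto_mult[OF tendsto_const l] half, of 2] by simp
  show "(\<lambda>N. hit_before (1 - q) N 0 N / (q ^ (N * N) * 2 ^ N)) \<longlonglongrightarrow> 1"
    using bounds by (intro tendsto_between[OF _ l r]) (auto elim: eventually_mono)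
  show "(\<lambda>N. hit_time_mass (1 - q) N 0 N / (q ^ (N * N) * 2 ^ N)) \<longlonglongrightarrow> 2"
    using bounds by (intro tendsto_between[OF _ mass_lower r]) (auto elim: eventually_mono)
qed

lemma hit_top_limits:
  assumes q: "0 < q" "q < 1"
  shows "(\<lambda>N. hit_before (1 - q) N N 0) \<longlonglongrightarrow> 1"
    and "(\<lambda>N. hit_time_mass (1 - q) N N 0) \<longlonglongrightarrow> 1"
proof -
  define l where "l N = (1 - q ^ N) ^ N" for N :: nat
  have l: "l \<longlonglongrightarrow> 1" unfolding l_def using q by real_asymp
  have r: "(\<lambda>N. 12 * (1 - l N)) \<longlonglongrightarrow> 0"
    using tendsto_mult[OF tendsto_const tendsto_diff[OF tendsto_const l], of 12 1] by simp
  have bounds: "\<forall>\<^sub>F N in sequentially.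
          (l N \<le> hit_before (1 - q) N N 0 \<and> hit_before (1 - q) N N 0 \<le> l N + 12 * (1 - l N))
        \<and> (l N \<le> hit_time_mass (1 - q) N N 0 \<and> hit_time_mass (1 - q) N N 0 \<le> l N + 12 * (1 - l N))"
    using eventually_cutoff_small[OF q]
    by eventually_elim (use hit_top_bounds[OF q] in \<open>auto simp: l_def\<close>)
  show "(\<lambda>N. hit_before (1 - q) N N 0) \<longlonglongrightarrow> 1" and "(\<lambda>N. hit_time_mass (1 - q) N N 0) \<longlonglongrightarrow> 1"
    using bounds by (intro tendsto_between[OF _ l r]; auto elim: eventually_mono)+
qed

theorem lemma5p1:
  fixes p :: real
  assumes "0 < p" and "p < 1"
  shows "(\<lambda>N. hit_before p N 0 N) \<sim>[at_top] (\<lambda>N. (1 - p) ^ (N ^ 2) * 2 ^ N) \<and>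
         (\<lambda>N. cond_hit_time p N 0 N) \<longlonglongrightarrow> 2 \<and>
         (\<lambda>N. cond_hit_time p N N 0) \<longlonglongrightarrow> 1"
proof -
  define q where "q = 1 - p"
  have q: "0 < q" "q < 1" and p: "p = 1 - q" using assms unfolding q_def by auto
  note bottom = hit_bottom_limits[OF q, folded p] and top = hit_top_limits[OF q, folded p]
  have "(\<lambda>N. hit_before p N 0 N) \<sim>[at_top] (\<lambda>N. (1 - p) ^ (N ^ 2) * 2 ^ N)"
    using bottom(1) by (intro asymp_equivI') (simp add: q_def power2_eq_square)
  moreover have "(\<lambda>N. cond_hit_time p N 0 N) \<longlonglongrightarrow> 2"
  proof -
    have "cond_hit_time p N 0 N = hit_time_mass p N 0 N / (q ^ (N * N) * 2 ^ N)
                                   / (hit_before p N 0 N / (q ^ (N * N) * 2 ^ N))" for N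
      unfolding cond_hit_time_def using q by simp
    then show ?thesis using tendsto_divide[OF bottom(2) bottom(1)] by simp
  qed
  moreover have "(\<lambda>N. cond_hit_time p N N 0) \<longlonglongrightarrow> 1"
    using tendsto_divide[OF top(2) top(1)] unfolding cond_hit_time_def by simp
  ultimately show ?thesis by blast
qed

end
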